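(* Let $X\ge 0$ be a random variable with an absolutely continuous distribution $P_X$ whose ordinary moments $\mu_n=\mathbb{E}[X^n]$ are finite for all $n\in\mathbb{N}$, and suppose that for some $q_0\in(0,1]$ $$\limsup_{n\to\infty}\frac{\ln\mu_n}{n^2}=\frac{\ln(1/q_0)}{2}.$$ Then $P_X$ is $q$-moment determinate for every $q\in(0,q_0)$. In particular, if $\limsup_{n\to\infty}\frac{\ln\mu_n}{n^2}=0$, then $P_X$ is $q$-moment determinate for every $q\in(0,1)$.
   Context: For $0<q<1$: the Jackson $q$-integral is $\int_0^a g(t)\,d_qt=a(1-q)\sum_{j=0}^\infty g(aq^j)q^j$ for $a>0$, and $\int_0^\infty g(t)\,d_qt=(1-q)\sum_{j\in\mathbb{Z}}g(q^j)q^j$. A function $f$ on $(0,\infty)$ is a $q$-density of $X$ (with distribution function $F_X$) if $F_X(x)=\int_0^x f(t)\,d_qt$ for all $x>0$; for a non-negative $X$ with $F_X$ continuous at $0$ (in particular for absolutely continuous $P_X$) a $q$-density exists, namely $f(t)=\frac{F_X(t)-F_X(qt)}{t(1-q)}$. The $n$-th $q$-moment is $m_q(n;X)=\int_0^\infty t^nf(t)\,d_qt=(1-q)\sum_{j\in\mathbb{Z}}q^{j(n+1)}f(q^j)$. Write $f\sim g$ iff $f(q^j)=g(q^j)$ for all $j\in\mathbb{Z}$. $P_X$ (with $q$-density $f$ and finite $q$-moments of all orders) is $q$-moment determinate if every random variable $Y$ with $q$-density $g$ and $m_q(k;Y)=m_q(k;X)$ for all $k\in\mathbb{N}_0$ satisfies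 $f\sim g$. *)

theory Defs
  imports "HOL-Probability.Probability"
begin

definition distr_fun :: "real measure \<Rightarrow> real \<Rightarrow> real" where
  "distr_fun P x = measure P {..x}"

definition jackson_int_has :: "real \<Rightarrow> (real \<Rightarrow> real) \<Rightarrow> real \<Rightarrow> real \<Rightarrow> bool" where
  "jackson_int_has q g a I \<longleftrightarrow> (\<lambda>j::nat. a * (1 - q) * (g (a * q ^ j) * q ^ j)) sums I"

definition q_density :: "real \<Rightarrow> real measure \<Rightarrow> (real \<Rightarrow> real) \<Rightarrow> bool" where
  "q_density q P f \<longleftrightarrow> (\<forall>x>0. jackson_int_has q f x (distr_fun P x))"

definition q_moment_has :: "real \<Rightarrow> (real \<Rightarrow> real) \<Rightarrow> nat \<Rightarrow> real \<Rightarrow> bool" where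
  "q_moment_has q f n m \<longleftrightarrow>
     ((\<lambda>j::int. (1 - q) * (q powi (j * (int n + 1)) * f (q powi j))) has_sum m) UNIV"

definition q_moment :: "real \<Rightarrow> (real \<Rightarrow> real) \<Rightarrow> nat \<Rightarrow> real" where
  "q_moment q f n = (\<Sum>\<^sub>\<infinity>j::int. (1 - q) * (q powi (j * (int n + 1)) * f (q powi j)))"

definition q_moments_finite :: "real \<Rightarrow> (real \<Rightarrow> real) \<Rightarrow> bool" where
  "q_moments_finite q f \<longleftrightarrow> (\<forall>n. \<exists>m. q_moment_has q f n m)"

definition q_moment_determinate :: "real \<Rightarrow> real measure \<Rightarrow> bool" where
  "q_moment_determinate q P \<longleftrightarrow>
     (\<exists>f. q_density q P f \<and> q_moments_finite q f \<and>
        (\<forall>(Q::real measure) g. prob_space Q \<and> sets Q = sets borel \<and> q_density q Q g \<and>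
            (\<forall>k. q_moment_has q g k (q_moment q f k))
          \<longrightarrow> (\<forall>j::int. f (q powi j) = g (q powi j))))"

end

theory Submission
  imports Defs "HOL-Real_Asymp.Real_Asymp"
begin

text \<open>
  For \<open>t > 0\<close>, \<open>f t = (F t - F (q t)) / (t (1 - q))\<close> is a \<open>q\<close>-density of \<open>P\<close>, and for every
  \<open>q\<close>-density \<open>g\<close> of a distribution \<open>Q\<close> the \<open>n\<close>-th \<open>q\<close>-moment is \<open>\<Sum>\<^sub>j m\<^sub>j q\<^sup>j\<^sup>n\<close> with
  \<open>m\<^sub>j = Q (q^(j+1), q^j]\<close>, while \<open>g\<close> itself is determined on the lattice \<open>q^\<int>\<close> by the \<open>m\<^sub>j\<close>.
  So it suffices to show that two nonnegative weight sequences on \<open>q^\<int>\<close> with the same power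
  moments \<open>s\<^sub>n\<close> coincide. Pairing their difference \<open>d\<close> with \<open>x^M \<Prod>\<^sub>k\<^sub><\<^sub>N (1 - x q^(k+1-j0))\<close>,
  whose zeros are the \<open>N\<close> lattice points just above \<open>q^j0\<close>, isolates \<open>d\<^sub>j\<^sub>0\<close> up to an error of
  order \<open>s\<^sub>0 q^((j0+1) M) + q^(N(N+1)/2 - N j0) s\<^sub>M\<^sub>+\<^sub>N\<close>. Since \<open>s\<^sub>n \<le> \<mu>\<^sub>n / q^n\<close> and the \<open>limsup\<close>
  hypothesis gives \<open>\<mu>\<^sub>n \<le> exp (\<beta> n^2)\<close> for some \<open>\<beta> < ln (1/q) / 2\<close>, the second error term vanishes
  as \<open>N \<rightarrow> \<infinity>\<close>, and then the first as \<open>M \<rightarrow> \<infinity>\<close>.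
\<close>

lemma has_sum_diff:
  fixes f g :: "'a \<Rightarrow> real"
  assumes "(f has_sum a) A" "(g has_sum b) A"
  shows "((\<lambda>x. f x - g x) has_sum (a - b)) A"
proof -
  have "((\<lambda>x. - g x) has_sum (- b)) A" using assms(2) by (simp add: has_sum_uminus)
  from has_sum_add[OF assms(1) this] show ?thesis by simp
qed

lemma has_sum_zero_term_bound:
  fixes f h :: "'a \<Rightarrow> real"
  assumes f: "(f has_sum 0) UNIV" and h: "(h has_sum H) UNIV"
    and bound: "\<And>x. x \<noteq> x0 \<Longrightarrow> \<bar>f x\<bar> \<le> h x" and "0 \<le> h x0"
  shows "\<bar>f x0\<bar> \<le> H"
proof -
  have rest_f: "(f has_sum (- f x0)) (UNIV - {x0})"
    using has_sum_Diff[OF f has_sum_finite[of "{x0}"]] by simp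
  have rest_h: "(h has_sum (H - h x0)) (UNIV - {x0})"
    using has_sum_Diff[OF h has_sum_finite[of "{x0}"]] by simp
  have "- f x0 \<le> H - h x0"
    by (rule has_sum_mono[OF rest_f rest_h]) (use bound abs_le_D1 in blast)
  moreover have "((\<lambda>x. - f x) has_sum f x0) (UNIV - {x0})"
    using rest_f by (simp add: has_sum_uminus)
  then have "f x0 \<le> H - h x0"
    by (rule has_sum_mono[OF _ rest_h]) (use bound abs_le_D2 in blast)
  ultimately show ?thesis using \<open>0 \<le> h x0\<close> by linarith
qed

lemma one_minus_ge_exp:
  fixes q y :: real
  assumes "0 \<le> y" "y \<le> q" "q < 1"
  shows "exp (- y / (1 - q)) \<le> 1 - y"
proof -
  have "1 + y / (1 - y) \<le> exp (y / (1 - y))" by (rule exp_ge_add_one_self)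
  moreover have "1 + y / (1 - y) = 1 / (1 - y)" using assms by (simp add: field_simps)
  ultimately have "exp (- (y / (1 - y))) \<le> 1 - y"
    using assms by (simp add: exp_minus field_simps)
  moreover have "y / (1 - y) \<le> y / (1 - q)"
    using assms by (intro divide_left_mono) auto
  then have "exp (- y / (1 - q)) \<le> exp (- (y / (1 - y)))" by simp
  ultimately show ?thesis by linarith
qed

lemma q_pochhammer_lower_bound:
  fixes q :: real
  assumes "0 < q" "q < 1"
  shows "exp (- 1 / (1 - q)^2) \<le> (\<Prod>k<N. 1 - q ^ Suc k)"
proof -
  have "exp (- (\<Sum>k<N. q ^ Suc k) / (1 - q)) = (\<Prod>k<N. exp (- (q ^ Suc k) / (1 - q)))"
    by (simp add: exp_sum sum_negf sum_divide_distrib flip: sum_negf)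
  also have "\<dots> \<le> (\<Prod>k<N. 1 - q ^ Suc k)"
    using assms by (intro prod_mono conjI one_minus_ge_exp)
      (auto simp: power_le_one mult_left_le_one_le less_imp_le)
  finally have prod_ge: "exp (- (\<Sum>k<N. q ^ Suc k) / (1 - q)) \<le> (\<Prod>k<N. 1 - q ^ Suc k)" .
  have "(\<Sum>k<N. q ^ Suc k) \<le> (\<Sum>k<N. q ^ k)"
    using assms by (intro sum_mono) (auto simp: mult_left_le_one_le)
  also have "\<dots> = (1 - q ^ N) / (1 - q)" using assms by (simp add: sum_gp_strict)
  also have "\<dots> \<le> 1 / (1 - q)" using assms by (intro divide_right_mono) auto
  finally have "(\<Sum>k<N. q ^ Suc k) / (1 - q) \<le> 1 / (1 - q) / (1 - q)"
    using assms by (intro divide_right_mono) auto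
  then have "(\<Sum>k<N. q ^ Suc k) / (1 - q) \<le> 1 / (1 - q)^2"
    by (simp add: power2_eq_square)
  then have "exp (- 1 / (1 - q)^2) \<le> exp (- (\<Sum>k<N. q ^ Suc k) / (1 - q))" by simp
  with prod_ge show ?thesis by linarith
qed

lemma has_sum_zero_times_poly:
  fixes d x :: "'a \<Rightarrow> real" and c :: "nat \<Rightarrow> real"
  assumes "\<And>n. ((\<lambda>j. d j * x j ^ n) has_sum 0) UNIV"
  shows "((\<lambda>j. d j * (x j ^ M * (\<Prod>k<N. 1 - x j * c k))) has_sum 0) UNIV"
proof (induction N arbitrary: M)
  case 0
  then show ?case using assms by simp
next
  case (Suc N)
  have "((\<lambda>j. d j * (x j ^ M * (\<Prod>k<N. 1 - x j * c k))
             - c N * (d j * (x j ^ Suc M * (\<Prod>k<N. 1 - x j * c k)))) has_sum (0 - c N * 0)) UNIV"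
    by (intro has_sum_diff has_sum_cmult_right Suc)
  then show ?case by (simp add: algebra_simps)
qed

lemma abs_prod_one_minus_le:
  fixes y :: "nat \<Rightarrow> real"
  assumes "\<And>k. k < N \<Longrightarrow> 1 \<le> y k"
  shows "\<bar>\<Prod>k<N. 1 - y k\<bar> \<le> (\<Prod>k<N. y k)"
  unfolding abs_prod using assms by (intro prod_mono) auto

lemma q_lattice_poly_bound:
  fixes q :: real and j j0 :: int and N M :: nat
  assumes q: "0 < q" "q < 1" and "j \<noteq> j0"
  shows "\<bar>(q powi j) ^ M * (\<Prod>k<N. 1 - q powi j * q powi (int k + 1 - j0))\<bar>
     \<le> (q powi (j0 + 1)) ^ M + (\<Prod>k<N. q powi (int k + 1 - j0)) * (q powi j) ^ (M + N)"
    (is "\<bar>?x ^ M * ?p\<bar> \<le> ?y ^ M + ?C * ?x ^ (M + N)")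
proof -
  have factor_eq: "q powi j * q powi (int k + 1 - j0) = q powi (j + int k + 1 - j0)" for k
    using q by (simp flip: power_int_add add: algebra_simps)
  have "0 < ?x" "0 \<le> ?C" using q by (auto intro: prod_nonneg)
  consider "j0 < j" | "j0 - int N \<le> j \<and> j < j0" | "j < j0 - int N"
    using \<open>j \<noteq> j0\<close> by linarith
  then show ?thesis
  proof cases
    case 1
    then have "0 \<le> q powi (j + int k + 1 - j0) \<and> q powi (j + int k + 1 - j0) \<le> 1" for k
      using q by (auto simp: power_int_def power_le_one)
    then have "0 \<le> ?p \<and> ?p \<le> 1"
      unfolding factor_eq by (auto intro: prod_nonneg prod_le_1)
    then have "\<bar>?x ^ M * ?p\<bar> \<le> ?x ^ M"
      using \<open>0 < ?x\<close> by (simp add: abs_mult mult_left_le)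
    also have "\<dots> \<le> ?y ^ M"
      using 1 q \<open>0 < ?x\<close> by (intro power_mono power_int_decreasing) auto
    finally have "\<bar>?x ^ M * ?p\<bar> \<le> ?y ^ M" .
    moreover have "0 \<le> ?C * ?x ^ (M + N)" using \<open>0 < ?x\<close> \<open>0 \<le> ?C\<close> by simp
    ultimately show ?thesis by linarith
  next
    case 2
    then have "?p = 0"
      unfolding factor_eq by (intro prod_zero bexI[of _ "nat (j0 - j - 1)"]) auto
    then have "\<bar>?x ^ M * ?p\<bar> = 0" by (simp only: mult_zero_right abs_zero)
    moreover have "0 \<le> ?y ^ M + ?C * ?x ^ (M + N)" using \<open>0 < ?x\<close> \<open>0 \<le> ?C\<close> q by simp
    ultimately show ?thesis by linarith
  next
    case 3
    have "1 \<le> q powi (j + int k + 1 - j0)" if "k < N" for k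
      using 3 q that by (simp add: power_int_def one_le_inverse power_le_one)
    then have "\<bar>?p\<bar> \<le> (\<Prod>k<N. q powi j * q powi (int k + 1 - j0))"
      unfolding factor_eq by (rule abs_prod_one_minus_le)
    also have "\<dots> = ?x ^ N * ?C"
      by (simp add: prod.distrib)
    finally have "\<bar>?x ^ M * ?p\<bar> \<le> ?x ^ M * (?x ^ N * ?C)"
      using \<open>0 < ?x\<close> by (simp add: abs_mult mult_left_mono)
    also have "\<dots> = ?C * ?x ^ (M + N)" by (simp add: power_add)
    finally have "\<bar>?x ^ M * ?p\<bar> \<le> ?C * ?x ^ (M + N)" .
    moreover have "0 \<le> ?y ^ M" using q by simp
    ultimately show ?thesis by linarith
  qed
qed

lemma q_lattice_point_estimate:
  fixes d w :: "int \<Rightarrow> real" and t :: "nat \<Rightarrow> real" and q :: real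
  assumes q: "0 < q" "q < 1"
    and d: "\<And>n. ((\<lambda>j. d j * (q powi j) ^ n) has_sum 0) UNIV"
    and w: "\<And>n. ((\<lambda>j. w j * (q powi j) ^ n) has_sum t n) UNIV"
    and dw: "\<And>j. \<bar>d j\<bar> \<le> w j"
  shows "\<bar>d j0\<bar> * (q powi j0) ^ M * (\<Prod>k<N. 1 - q ^ Suc k)
       \<le> t 0 * (q powi (j0 + 1)) ^ M + (\<Prod>k<N. q powi (int k + 1 - j0)) * t (M + N)"
proof -
  define p where "p j = (q powi j) ^ M * (\<Prod>k<N. 1 - q powi j * q powi (int k + 1 - j0))" for j
  define C where "C = (\<Prod>k<N. q powi (int k + 1 - j0))"
  define h where "h j = w j * ((q powi (j0 + 1)) ^ M + C * (q powi j) ^ (M + N))" for j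
  have w_nonneg: "0 \<le> w j" for j using dw[of j] by linarith
  have "((\<lambda>j. d j * p j) has_sum 0) UNIV"
    unfolding p_def by (rule has_sum_zero_times_poly[OF d])
  moreover have "(h has_sum (t 0 * (q powi (j0 + 1)) ^ M + C * t (M + N))) UNIV"
    using has_sum_add[OF has_sum_cmult_right[OF w[of 0], of "(q powi (j0 + 1)) ^ M"]
                         has_sum_cmult_right[OF w[of "M + N"], of C]]
    by (simp add: h_def[abs_def] algebra_simps)
  moreover have "\<bar>d j * p j\<bar> \<le> h j" if "j \<noteq> j0" for j
    unfolding abs_mult[of "d j"] h_def p_def C_def
    using q_lattice_poly_bound[OF q that] dw w_nonneg by (intro mult_mono) auto
  moreover have "0 \<le> h j0"
    unfolding h_def C_def using w_nonneg q by (intro mult_nonneg_nonneg add_nonneg_nonneg prod_nonneg) auto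
  ultimately have "\<bar>d j0 * p j0\<bar> \<le> t 0 * (q powi (j0 + 1)) ^ M + C * t (M + N)"
    by (rule has_sum_zero_term_bound)
  moreover have "q powi j0 * q powi (int k + 1 - j0) = q ^ Suc k" for k
    using q by (simp add: add.commute flip: power_int_add power_int_of_nat)
  then have "p j0 = (q powi j0) ^ M * (\<Prod>k<N. 1 - q ^ Suc k)"
    by (simp add: p_def)
  moreover have "0 \<le> (\<Prod>k<N. 1 - q ^ Suc k)"
    using q by (intro prod_nonneg) (simp add: power_le_one mult_le_one)
  ultimately show ?thesis using q by (simp add: abs_mult C_def mult.assoc)
qed

lemma prod_q_powi_shifted:
  fixes q :: real and j0 :: int
  assumes "0 < q"
  shows "(\<Prod>k<N. q powi (int k + 1 - j0)) = q powr (real N * (real N + 1) / 2 - real N * of_int j0)"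
proof (induction N)
  case 0
  then show ?case using assms by simp
next
  case (Suc N)
  have "q powi (int N + 1 - j0) = q powr of_int (int N + 1 - j0)"
    using assms by (intro powr_real_of_int'[symmetric]) auto
  then have "(\<Prod>k<Suc N. q powi (int k + 1 - j0))
      = q powr (real N * (real N + 1) / 2 - real N * of_int j0 + of_int (int N + 1 - j0))"
    using Suc by (simp add: powr_add)
  also have "real N * (real N + 1) / 2 - real N * of_int j0 + of_int (int N + 1 - j0)
      = real (Suc N) * (real (Suc N) + 1) / 2 - real (Suc N) * of_int j0"
    by (simp add: algebra_simps add_divide_distrib)
  finally show ?case .
qed

lemma q_lattice_weights_eq_if_moments_eq:
  fixes a b :: "int \<Rightarrow> real" and s :: "nat \<Rightarrow> real" and q :: real
  assumes q: "0 < q" "q < 1"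
    and a: "\<And>j. 0 \<le> a j" and b: "\<And>j. 0 \<le> b j"
    and ha: "\<And>n. ((\<lambda>j. a j * (q powi j) ^ n) has_sum s n) UNIV"
    and hb: "\<And>n. ((\<lambda>j. b j * (q powi j) ^ n) has_sum s n) UNIV"
    and decay: "\<And>u v. (\<lambda>n. s n * q powr (real n ^ 2 / 2 + u * real n + v)) \<longlonglongrightarrow> 0"
  shows "a = b"
proof
  fix j0
  define c0 where "c0 = exp (- 1 / (1 - q)^2)"
  define x0 where "x0 = q powi j0"
  define C where "C N = (\<Prod>k<N. q powi (int k + 1 - j0))" for N
  have "0 < x0" using q by (simp add: x0_def)
  have estimate: "\<bar>a j0 - b j0\<bar> * x0 ^ M * c0 \<le> 2 * s 0 * (x0 * q) ^ M + 2 * (C N * s (M + N))"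
    for M N
  proof -
    have "\<bar>a j0 - b j0\<bar> * x0 ^ M * c0 \<le> \<bar>a j0 - b j0\<bar> * x0 ^ M * (\<Prod>k<N. 1 - q ^ Suc k)"
      unfolding c0_def using q_pochhammer_lower_bound[OF q] \<open>0 < x0\<close>
      by (intro mult_left_mono) auto
    also have "\<dots> \<le> 2 * s 0 * (q powi (j0 + 1)) ^ M + C N * (2 * s (M + N))"
      unfolding x0_def C_def
    proof (rule q_lattice_point_estimate[OF q, where d = "\<lambda>j. a j - b j" and w = "\<lambda>j. a j + b j"
          and t = "\<lambda>n. 2 * s n"])
      show "((\<lambda>j. (a j - b j) * (q powi j) ^ n) has_sum 0) UNIV" for n
        using has_sum_diff[OF ha[of n] hb[of n]] by (simp add: algebra_simps)
      show "((\<lambda>j. (a j + b j) * (q powi j) ^ n) has_sum (2 * s n)) UNIV" for n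
        using has_sum_add[OF ha[of n] hb[of n]] by (simp add: algebra_simps)
      show "\<bar>a j - b j\<bar> \<le> a j + b j" for j
        using a[of j] b[of j] by linarith
    qed
    also have "q powi (j0 + 1) = x0 * q"
      using q by (simp add: x0_def power_int_add)
    finally show ?thesis by (simp add: algebra_simps)
  qed
  have tail: "(\<lambda>N. C N * s (M + N)) \<longlonglongrightarrow> 0" for M
  proof -
    \<comment> \<open>\<open>C N\<close> is \<open>q\<close> to a quadratic in \<open>N\<close>; rewrite it as a quadratic in \<open>n = N + M\<close>\<close>
    define u where "u = 1/2 - of_int j0 - real M"
    define v where "v = - real M * u - real M ^ 2 / 2"
    have "C N * s (M + N) = s (N + M) * q powr (real (N + M) ^ 2 / 2 + u * real (N + M) + v)" for N
    proof -
      have "real (N + M) ^ 2 / 2 + u * real (N + M) + v = real N * (real N + 1) / 2 - real N * of_int j0"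
        unfolding u_def v_def by (simp add: power2_eq_square algebra_simps add_divide_distrib diff_divide_distrib)
      then show ?thesis
        unfolding C_def prod_q_powi_shifted[OF q(1)] by (simp add: add.commute)
    qed
    then show ?thesis
      using LIMSEQ_ignore_initial_segment[OF decay[of u v], of M] by simp
  qed
  have bound: "\<bar>a j0 - b j0\<bar> * c0 \<le> 2 * s 0 * q ^ M" for M
  proof -
    have "(\<lambda>N. 2 * s 0 * (x0 * q) ^ M + 2 * (C N * s (M + N))) \<longlonglongrightarrow> 2 * s 0 * (x0 * q) ^ M + 2 * 0"
      by (intro tendsto_intros tail)
    then have "\<bar>a j0 - b j0\<bar> * x0 ^ M * c0 \<le> 2 * s 0 * (x0 * q) ^ M"
      using estimate by (intro LIMSEQ_le_const) auto
    then have "x0 ^ M * (\<bar>a j0 - b j0\<bar> * c0) \<le> x0 ^ M * (2 * s 0 * q ^ M)"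
      by (simp add: algebra_simps power_mult_distrib)
    then show ?thesis using \<open>0 < x0\<close> by simp
  qed
  have "(\<lambda>M. 2 * s 0 * q ^ M) \<longlonglongrightarrow> 2 * s 0 * 0"
    using q by (intro tendsto_intros LIMSEQ_power_zero) auto
  then have "\<bar>a j0 - b j0\<bar> * c0 \<le> 0"
    using bound by (intro LIMSEQ_le_const) auto
  moreover have "0 < c0" by (simp add: c0_def)
  ultimately show "a j0 = b j0" by (simp add: mult_le_0_iff)
qed

definition q_mass :: "real \<Rightarrow> real measure \<Rightarrow> int \<Rightarrow> real" where
  "q_mass q P j = distr_fun P (q powi j) - distr_fun P (q powi (j + 1))"

lemma q_mass_eq_measure:
  assumes "real_distribution P" "0 < q" "q < 1"
  shows "q_mass q P j = measure P {q powi (j + 1) <.. q powi j}"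
proof -
  interpret real_distribution P by fact
  have "q powi (j + 1) < q powi j" using assms by (intro power_int_strict_decreasing) auto
  then show ?thesis
    using cdf_diff_eq unfolding q_mass_def distr_fun_def cdf_def by simp
qed

lemma q_mass_nonneg:
  assumes "real_distribution P" "0 < q" "q < 1"
  shows "0 \<le> q_mass q P j"
  using q_mass_eq_measure[OF assms] by simp

lemma q_density_eq:
  fixes q x :: real
  assumes q: "0 < q" "q < 1" and "q_density q Q h" and x: "0 < x"
  shows "h x = (distr_fun Q x - distr_fun Q (q * x)) / (x * (1 - q))"
proof -
  define f where "f j = x * (1 - q) * (h (x * q ^ j) * q ^ j)" for j
  have "f sums distr_fun Q x"
    using assms unfolding q_density_def jackson_int_has_def f_def by auto
  moreover have "(\<lambda>j. f (Suc j)) sums distr_fun Q (q * x)"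
  proof -
    have "(\<lambda>j. (q * x) * (1 - q) * (h ((q * x) * q ^ j) * q ^ j)) sums distr_fun Q (q * x)"
      using assms unfolding q_density_def jackson_int_has_def by auto
    then show ?thesis by (simp add: f_def algebra_simps)
  qed
  then have "f sums (distr_fun Q (q * x) + f 0)" by (simp add: sums_Suc_iff)
  ultimately have "distr_fun Q x = distr_fun Q (q * x) + f 0" using sums_unique2 by blast
  then show ?thesis using q x by (simp add: f_def field_simps)
qed

lemma q_density_at_q_powi:
  assumes "0 < q" "q < 1" "q_density q Q h"
  shows "h (q powi j) = q_mass q Q j / (q powi j * (1 - q))"
  using q_density_eq[OF assms, of "q powi j"] assms(1)
  by (simp add: q_mass_def power_int_add mult.commute)

lemma q_moment_term_eq:
  assumes "0 < q" "q < 1" "q_density q Q h"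
  shows "(1 - q) * (q powi (j * (int n + 1)) * h (q powi j)) = q_mass q Q j * (q powi j) ^ n"
proof -
  have "q powi (j * (int n + 1)) = (q powi j) ^ n * q powi j"
    by (simp add: power_int_mult power_int_add flip: power_int_of_nat)
  moreover have "(1 - q) * (q powi j * h (q powi j)) = q_mass q Q j"
    using q_density_at_q_powi[OF assms, of j] assms(1,2) by simp
  ultimately show ?thesis
    by (metis mult.assoc mult.commute)
qed

lemma q_density_cdf_quotient:
  assumes "real_distribution P" "distr_fun P 0 = 0" and q: "0 < q" "q < 1"
  shows "q_density q P (\<lambda>t. (distr_fun P t - distr_fun P (q * t)) / (t * (1 - q)))"
  unfolding q_density_def jackson_int_has_def
proof (intro allI impI)
  interpret real_distribution P by fact
  fix x :: real assume "0 < x"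
  let ?F = "distr_fun P"
  have F_cdf: "?F = cdf P" by (simp add: distr_fun_def[abs_def] cdf_def[abs_def])
  have "(\<lambda>j. ?F (x * q ^ j)) \<longlonglongrightarrow> ?F 0"
  proof (rule filterlim_compose[of ?F])
    show "(?F \<longlongrightarrow> ?F 0) (at_right 0)"
      using cdf_is_right_cont[of 0] unfolding F_cdf continuous_within by simp
    show "filterlim (\<lambda>j. x * q ^ j) (at_right 0) sequentially"
      using \<open>0 < x\<close> q
      by (intro tendsto_imp_filterlim_at_right tendsto_mult_right_zero LIMSEQ_power_zero) auto
  qed
  then have "(\<lambda>j. ?F (x * q ^ j) - ?F (x * q ^ Suc j)) sums (?F (x * q ^ 0) - ?F 0)"
    by (rule telescope_sums')
  moreover have "x * (1 - q) * ((?F (x * q ^ j) - ?F (q * (x * q ^ j))) / (x * q ^ j * (1 - q)) * q ^ j)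
      = ?F (x * q ^ j) - ?F (x * q ^ Suc j)" for j
    using \<open>0 < x\<close> q by (simp add: field_simps)
  ultimately show "(\<lambda>j. x * (1 - q) * ((?F (x * q ^ j) - ?F (q * (x * q ^ j))) / (x * q ^ j * (1 - q))
      * q ^ j)) sums ?F x"
    using \<open>?F 0 = 0\<close> by simp
qed

lemma disjoint_family_q_powi_intervals:
  fixes q :: real
  assumes "0 < q" "q < 1"
  shows "disjoint_family (\<lambda>j::int. {q powi (j + 1) <.. q powi j})"
  unfolding disjoint_family_on_def
proof (intro ballI impI)
  fix j k :: int assume "j \<noteq> k"
  have "{q powi (i + 1) <.. q powi i} \<inter> {q powi (l + 1) <.. q powi l} = {}" if "i < l" for i l
  proof -
    have "q powi l \<le> q powi (i + 1)"
      using assms that by (intro power_int_decreasing) auto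
    then show ?thesis by auto
  qed
  then show "{q powi (j + 1) <.. q powi j} \<inter> {q powi (k + 1) <.. q powi k} = {}"
    using \<open>j \<noteq> k\<close> by (metis Int_commute linorder_neq_iff)
qed

lemma sum_q_mass_moment_le:
  fixes P :: "real measure" and q :: real
  assumes "real_distribution P" and nonneg: "AE x in P. 0 \<le> x"
    and integrable: "integrable P (\<lambda>x. x ^ n)" and q: "0 < q" "q < 1" and "finite J"
  shows "(\<Sum>j\<in>J. q_mass q P j * (q powi j) ^ n) \<le> (\<integral>x. x ^ n \<partial>P) / q ^ n"
proof -
  interpret real_distribution P by fact
  define I where "I j = {q powi (j + 1) <.. q powi j}" for j
  have pointwise: "(\<Sum>j\<in>J. indicator (I j) x * (q powi j) ^ n) \<le> x ^ n / q ^ n" if "0 \<le> x" for x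
  proof (cases "\<exists>j\<in>J. x \<in> I j")
    case True
    then obtain j where "j \<in> J" "x \<in> I j" by blast
    then have "(\<Sum>j\<in>J. indicator (I j) x * (q powi j) ^ n) = (q powi j) ^ n"
      using sum_indicator_disjoint_family[OF _ _ \<open>finite J\<close>, of I x j "\<lambda>j. (q powi j) ^ n"]
        disjoint_family_q_powi_intervals[OF q] unfolding I_def
      by (auto simp: mult.commute disjoint_family_on_def)
    also have "\<dots> \<le> (x / q) ^ n"
    proof (rule power_mono)
      have "q * q powi j < x" using \<open>x \<in> I j\<close> q by (simp add: I_def power_int_add mult.commute)
      then show "q powi j \<le> x / q" using q by (simp add: field_simps)
    qed (use q in simp)
    finally show ?thesis by (simp add: power_divide)
  next
    case False
    then have "(\<Sum>j\<in>J. indicator (I j) x * (q powi j) ^ n) = 0"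
      by (intro sum.neutral) auto
    then show ?thesis using that q by simp
  qed
  have "(\<Sum>j\<in>J. q_mass q P j * (q powi j) ^ n) = (\<Sum>j\<in>J. \<integral>x. indicator (I j) x * (q powi j) ^ n \<partial>P)"
    using q_mass_eq_measure[OF \<open>real_distribution P\<close> q] by (simp add: I_def)
  also have "\<dots> = (\<integral>x. (\<Sum>j\<in>J. indicator (I j) x * (q powi j) ^ n) \<partial>P)"
    by (rule Bochner_Integration.integral_sum[symmetric])
      (auto simp: I_def less_top[symmetric] intro!: integrable_mult_left integrable_real_indicator)
  also have "\<dots> \<le> (\<integral>x. x ^ n / q ^ n \<partial>P)"
    using nonneg pointwise integrable
    by (intro integral_mono_AE) (auto simp: I_def less_top[symmetric] elim!: eventually_mono
        intro!: integrable_mult_left integrable_real_indicator)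
  finally show ?thesis by simp
qed

lemma q_mass_moment_summable:
  assumes "real_distribution P" "AE x in P. 0 \<le> x" "integrable P (\<lambda>x. x ^ n)" "0 < q" "q < 1"
  shows "(\<lambda>j. q_mass q P j * (q powi j) ^ n) summable_on UNIV"
proof (rule nonneg_bdd_above_summable_on)
  show "0 \<le> q_mass q P j * (q powi j) ^ n" for j
    using q_mass_nonneg[of P q j] assms by simp
  show "bdd_above (sum (\<lambda>j. q_mass q P j * (q powi j) ^ n) ` {J. J \<subseteq> UNIV \<and> finite J})"
    using sum_q_mass_moment_le[OF assms] by (intro bdd_aboveI) auto
qed

lemma infsum_q_mass_moment_le:
  assumes "real_distribution P" "AE x in P. 0 \<le> x" "integrable P (\<lambda>x. x ^ n)" "0 < q" "q < 1"
  shows "(\<Sum>\<^sub>\<infinity>j. q_mass q P j * (q powi j) ^ n) \<le> (\<integral>x. x ^ n \<partial>P) / q ^ n"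
  using q_mass_moment_summable[OF assms] sum_q_mass_moment_le[OF assms]
  by (intro infsum_le_finite_sums) auto

lemma q_moment_determinate_if_decay:
  fixes P :: "real measure" and s :: "nat \<Rightarrow> real"
  assumes P: "real_distribution P" and q: "0 < q" "q < 1" and f: "q_density q P f"
    and moments: "\<And>n. ((\<lambda>j. q_mass q P j * (q powi j) ^ n) has_sum s n) UNIV"
    and decay: "\<And>u v. (\<lambda>n. s n * q powr (real n ^ 2 / 2 + u * real n + v)) \<longlonglongrightarrow> 0"
  shows "q_moment_determinate q P"
  unfolding q_moment_determinate_def
proof (intro exI conjI allI impI)
  have f_moments: "q_moment_has q f n (s n)" for n
    unfolding q_moment_has_def q_moment_term_eq[OF q f] by (rule moments)
  then show "q_moments_finite q f" unfolding q_moments_finite_def by blast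
  show "q_density q P f" by fact
  fix Q g j
  assume "prob_space Q \<and> sets Q = sets borel \<and> q_density q Q g
    \<and> (\<forall>k. q_moment_has q g k (q_moment q f k))"
  then have Q: "real_distribution Q" and g: "q_density q Q g"
    and g_moments: "\<And>k. q_moment_has q g k (q_moment q f k)"
    by (auto simp: real_distribution_def real_distribution_axioms_def)
  have "q_moment q f n = s n" for n
    using f_moments[of n] unfolding q_moment_def q_moment_has_def by (rule infsumI)
  then have "((\<lambda>j. q_mass q Q j * (q powi j) ^ n) has_sum s n) UNIV" for n
    using g_moments[of n] unfolding q_moment_has_def q_moment_term_eq[OF q g] by simp
  then have "q_mass q P = q_mass q Q"
    using q_mass_nonneg[OF P q] q_mass_nonneg[OF Q q] moments decay
    by (intro q_lattice_weights_eq_if_moments_eq[OF q]) auto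
  then show "f (q powi j) = g (q powi j)"
    using q_density_at_q_powi[OF q f] q_density_at_q_powi[OF q g] by simp
qed

lemma distr_fun_0_eq_0_if_nonneg:
  assumes "prob_space P" "sets P = sets borel" "absolutely_continuous lborel P"
    and "AE x in P. 0 \<le> x"
  shows "distr_fun P 0 = 0"
proof -
  interpret prob_space P by fact
  have "AE x in P. x \<noteq> 0"
    using absolutely_continuous_AE[OF _ assms(3) AE_lborel_singleton] assms(2) by auto
  with assms(4) have "AE x in P. x \<notin> {..0}" by eventually_elim auto
  then show ?thesis
    unfolding distr_fun_def by (subst prob_eq_0) (auto simp: sets_eq_imp_space_eq assms(2))
qed

lemma eventually_le_exp_square_if_limsup_less:
  fixes \<mu> :: "nat \<Rightarrow> real"
  assumes "limsup (\<lambda>n. ereal (ln (\<mu> n) / (real n)\<^sup>2)) < ereal \<beta>"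
  shows "eventually (\<lambda>n. \<mu> n \<le> exp (\<beta> * (real n)\<^sup>2)) sequentially"
  using Limsup_lessD[OF assms] eventually_ge_at_top[of 1]
proof eventually_elim
  case (elim n)
  then have "ln (\<mu> n) < \<beta> * (real n)\<^sup>2" by (simp add: divide_less_eq)
  then show ?case
  proof (cases "0 < \<mu> n")
    case True
    then show ?thesis
      using \<open>ln (\<mu> n) < \<beta> * (real n)\<^sup>2\<close> by (metis exp_ln exp_less_mono less_imp_le)
  next
    case False
    then show ?thesis using exp_gt_zero[of "\<beta> * (real n)\<^sup>2"] by linarith
  qed
qed

lemma q_powr_quadratic_decay:
  fixes s :: "nat \<Rightarrow> real" and q \<beta> \<gamma> u v :: real
  assumes q: "0 < q" and s: "\<And>n. 0 \<le> s n" and \<beta>: "\<beta> + ln q / 2 < 0"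
    and growth: "eventually (\<lambda>n. s n \<le> exp (\<beta> * (real n)\<^sup>2 + \<gamma> * real n)) sequentially"
  shows "(\<lambda>n. s n * q powr ((real n)\<^sup>2 / 2 + u * real n + v)) \<longlonglongrightarrow> 0"
proof (rule tendsto_sandwich)
  define g where "g = \<beta> + ln q / 2"
  have "g < 0" using \<beta> by (simp add: g_def)
  show "\<forall>\<^sub>F n in sequentially. 0 \<le> s n * q powr ((real n)\<^sup>2 / 2 + u * real n + v)"
    using s by simp
  show "\<forall>\<^sub>F n in sequentially. s n * q powr ((real n)\<^sup>2 / 2 + u * real n + v)
      \<le> exp (g * (real n)\<^sup>2 + (\<gamma> + u * ln q) * real n + v * ln q)"
    using growth
  proof eventually_elim
    case (elim n)
    have "q powr ((real n)\<^sup>2 / 2 + u * real n + v) = exp (((real n)\<^sup>2 / 2 + u * real n + v) * ln q)"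
      using q by (simp add: powr_def mult.commute)
    then have "s n * q powr ((real n)\<^sup>2 / 2 + u * real n + v)
        \<le> exp (\<beta> * (real n)\<^sup>2 + \<gamma> * real n) * exp (((real n)\<^sup>2 / 2 + u * real n + v) * ln q)"
      using elim by (simp add: mult_right_mono)
    also have "\<dots> = exp (g * (real n)\<^sup>2 + (\<gamma> + u * ln q) * real n + v * ln q)"
      by (simp add: g_def algebra_simps flip: exp_add)
    finally show ?case .
  qed
  show "(\<lambda>n. exp (g * (real n)\<^sup>2 + (\<gamma> + u * ln q) * real n + v * ln q)) \<longlonglongrightarrow> 0"
    using \<open>g < 0\<close> by real_asymp
qed simp

lemma q_moment_determinate_if_moment_growth:
  fixes P :: "real measure" and q \<beta> :: real
  assumes P: "real_distribution P" and nonneg: "AE x in P. 0 \<le> x"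
    and integrable: "\<And>n. integrable P (\<lambda>x. x ^ n)" and "distr_fun P 0 = 0"
    and q: "0 < q" "q < 1" and \<beta>: "\<beta> + ln q / 2 < 0"
    and growth: "eventually (\<lambda>n. (\<integral>x. x ^ n \<partial>P) \<le> exp (\<beta> * (real n)\<^sup>2)) sequentially"
  shows "q_moment_determinate q P"
proof -
  define s where "s n = (\<Sum>\<^sub>\<infinity>j. q_mass q P j * (q powi j) ^ n)" for n
  from growth have "eventually (\<lambda>n. s n \<le> exp (\<beta> * (real n)\<^sup>2 + ln (1 / q) * real n)) sequentially"
  proof eventually_elim
    case (elim n)
    have "s n \<le> (\<integral>x. x ^ n \<partial>P) / q ^ n"
      unfolding s_def by (rule infsum_q_mass_moment_le[OF P nonneg integrable q])
    also have "\<dots> \<le> exp (\<beta> * (real n)\<^sup>2) / q ^ n"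
      using elim q by (simp add: divide_right_mono)
    also have "\<dots> = exp (\<beta> * (real n)\<^sup>2 + ln (1 / q) * real n)"
      using q by (simp add: exp_add ln_div mult.commute exp_of_nat_mult divide_inverse power_inverse
          flip: exp_minus)
    finally show ?case .
  qed
  then show ?thesis
  proof (intro q_moment_determinate_if_decay[OF P q q_density_cdf_quotient[OF P _ q]]
      q_powr_quadratic_decay[OF q(1) _ \<beta>])
    show "distr_fun P 0 = 0" by fact
    show "((\<lambda>j. q_mass q P j * (q powi j) ^ n) has_sum s n) UNIV" for n
      unfolding s_def by (intro has_sum_infsum q_mass_moment_summable[OF P nonneg integrable q])
    show "0 \<le> s n" for n
      unfolding s_def using q_mass_nonneg[OF P q] q by (intro infsum_nonneg) simp
  qed
qed

theorem proposition4:
  fixes P :: "real measure" and q0 :: real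
  assumes "prob_space P"
    and "sets P = sets borel"
    and "absolutely_continuous lborel P"
    and "AE x in P. x \<ge> 0"
    and "\<forall>n::nat. integrable P (\<lambda>x. x ^ n)"
    and "0 < q0" and "q0 \<le> 1"
    and "limsup (\<lambda>n::nat. ereal (ln (\<integral>x. x ^ n \<partial>P) / (real n)\<^sup>2)) = ereal (ln (1 / q0) / 2)"
  shows "\<forall>q. 0 < q \<and> q < q0 \<longrightarrow> q_moment_determinate q P"
proof (intro allI impI)
  fix q :: real
  assume "0 < q \<and> q < q0"
  then have q: "0 < q" "q < 1" and "ln q < ln q0" using assms(7) by auto
  define \<beta> where "\<beta> = (ln (1 / q0) + ln (1 / q)) / 4"
  have "\<beta> + ln q / 2 = (ln q - ln q0) / 4" "ln (1 / q0) / 2 < \<beta>"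
    using q assms(6) \<open>ln q < ln q0\<close> by (simp_all add: \<beta>_def ln_div field_simps)
  moreover have "eventually (\<lambda>n. (\<integral>x. x ^ n \<partial>P) \<le> exp (\<beta> * (real n)\<^sup>2)) sequentially"
    using \<open>ln (1 / q0) / 2 < \<beta>\<close> by (intro eventually_le_exp_square_if_limsup_less) (simp add: assms(8))
  moreover have "real_distribution P"
    using assms(1,2) by (simp add: real_distribution_def real_distribution_axioms_def)
  moreover have "distr_fun P 0 = 0" using assms(1-4) by (rule distr_fun_0_eq_0_if_nonneg)
  ultimately show "q_moment_determinate q P"
    using q assms(4,5) \<open>ln q < ln q0\<close> by (intro q_moment_determinate_if_moment_growth) auto
qed

end
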